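(* Consider the following network model. Let $q$ be a prime power, $K\ge1$, $L\ge1$, $N_{\mathrm S}\ge K$, $N_{\mathrm R}\ge1$. A source S draws $N_{\mathrm S}$ coefficient vectors i.i.d. uniformly from $\mathbb{F}_q^K$ and broadcasts one packet per vector. Each packet is received by the destination D and by each relay $\mathrm R_j$ ($j=1,\dots,L$) according to erasure events that are independent of the coefficients. Relay $\mathrm R_j$, having received $m_j$ packets with coefficient matrix $\mathbf{C}_{\mathrm S\to\mathrm R_j}\in\mathbb{F}_q^{m_j\times K}$, draws $\mathbf{G}_j\in\mathbb{F}_q^{N_{\mathrm R}\times m_j}$ with i.i.d. uniform entries (independent of everything else) and transmits the $N_{\mathrm R}$ rows of $\mathbf{G}_j\mathbf{C}_{\mathrm S\to\mathrm R_j}$; D receives $m'_j$ of them. D stacks the $m_{\mathrm D}$ coefficient vectors received directly from S and all $m'=\sum_j m'_j$ recoded vectors received from the relays into the matrix $\mathbf{C}_{\mathrm D}$. Let $m$ be the number of distinct source packets received by at least one relay and $m_{\mathrm{RD}}$ the number of those also received by D. Let $X$ be the event $\operatorname{rank}(\mathbf{C}_{\mathrm D})=K$. Then, conditional on the erasure pattern (so that $m,m_{\mathrm D},m_{\mathrm{RD}},m'_1,\dots,m'_L$ are fixed), $$\Pr[X]\le \mathbb{P}^{(2)}\big(m'+m_{\mathrm D},\; m-m_{\mathrm{RD}}+m_{\mathrm D},\; m_{\mathrm D};\,K\big),$$ where for nonnegative integers $m_1,m_2\ge m_{12}$, $$\mathbb{P}^{(2)}(m_1,m_2,m_{12};K)=\sum_{i=\max(0,\,K-m_1+m_{12},\,K-m_2+m_{12})}^{\min(m_{12},K)}\mathbb{P}_i(m_{12},K)\,\mathbb{P}(m_1-m_{12},K-i)\,\mathbb{P}(m_2-m_{12},K-i),$$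 with $\mathbb{P}(a,b)=\prod_{i=0}^{b-1}(1-q^{i-a})$ and $\mathbb{P}_r(a,b)=q^{-a(b-r)}\prod_{i=0}^{r-1}\frac{q^{b-i}-1}{q^{r-i}-1}\prod_{i=0}^{r-1}(1-q^{i-a})$.
   Context: $\mathbb{P}(a,b)$ is the probability that an $a\times b$ matrix with i.i.d. uniform entries over $\mathbb{F}_q$ has rank $b$, and $\mathbb{P}_r(a,b)$ the probability it has rank $r$. $\mathbb{P}^{(2)}(m_1,m_2,m_{12};K)$ is the probability that two uniformly random matrices with $m_1$ and $m_2$ rows and $K$ columns, sharing exactly $m_{12}$ common rows, are simultaneously of rank $K$. *)

theory Defs
  imports "Jordan_Normal_Form.DL_Rank_Submatrix"
begin

text \<open>Probability that an a x b uniform random matrix over F_q has rank b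
  (q = field size).\<close>
definition Pfull :: "nat \<Rightarrow> nat \<Rightarrow> nat \<Rightarrow> real" where
  "Pfull q a b = (\<Prod>i<b. 1 - (real q) powi (int i - int a))"

text \<open>Probability that an a x b uniform random matrix over F_q has rank r.\<close>
definition Prank :: "nat \<Rightarrow> nat \<Rightarrow> nat \<Rightarrow> nat \<Rightarrow> real" where
  "Prank q r a b = (real q) powi (- (int a * (int b - int r)))
     * (\<Prod>i<r. ((real q) ^ (b - i) - 1) / ((real q) ^ (r - i) - 1))
     * (\<Prod>i<r. 1 - (real q) powi (int i - int a))"

definition P2 :: "nat \<Rightarrow> nat \<Rightarrow> nat \<Rightarrow> nat \<Rightarrow> nat \<Rightarrow> real" where
  "P2 q m1 m2 m12 K =
     (\<Sum>i\<in>{i. i \<le> min m12 K \<and> int K - int m1 + int m12 \<le> int i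
                \<and> int K - int m2 + int m12 \<le> int i}.
        Prank q i m12 K * Pfull q (m1 - m12) (K - i) * Pfull q (m2 - m12) (K - i))"

text \<open>Coefficient matrix of relay j: the rows of C indexed by the source packets
  received by relay j (in increasing order).\<close>
definition relay_in :: "'a::field mat \<Rightarrow> nat set \<Rightarrow> 'a mat" where
  "relay_in C S = submatrix C S UNIV"

text \<open>Matrix C_D at the destination: rows of C received directly (index set DS),
  stacked on the rows of G_j * C_{S->R_j} received from relay j (index set RD j),
  for j = 0..L-1.\<close>
definition dest_mat ::
  "nat \<Rightarrow> nat \<Rightarrow> nat set \<Rightarrow> (nat \<Rightarrow> nat set) \<Rightarrow> (nat \<Rightarrow> nat set)
     \<Rightarrow> 'a::field mat \<Rightarrow> (nat \<Rightarrow> 'a mat) \<Rightarrow> 'a mat" where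
  "dest_mat K L DS RS RD C G =
     submatrix C DS UNIV @\<^sub>r
     foldr (\<lambda>j M. submatrix (G j * relay_in C (RS j)) (RD j) UNIV @\<^sub>r M) [0..<L] (0\<^sub>m 0 K)"

text \<open>Sample space given the erasure pattern: the source coefficient matrix C
  (NS x K, uniform) and the relay coding matrices G_j (NR x m_j, uniform),
  all independent, i.e. uniform on the product.\<close>
definition outcomes ::
  "nat \<Rightarrow> nat \<Rightarrow> nat \<Rightarrow> nat \<Rightarrow> (nat \<Rightarrow> nat set) \<Rightarrow> ('a::field mat \<times> (nat \<Rightarrow> 'a mat)) set" where
  "outcomes K L NS NR RS =
     carrier_mat NS K \<times> (\<Pi>\<^sub>E j\<in>{..<L}. carrier_mat NR (card (RS j)))"

definition prob_X ::
  "'a::{field,finite} itself \<Rightarrow> nat \<Rightarrow> nat \<Rightarrow> nat \<Rightarrow> nat \<Rightarrow> nat set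
     \<Rightarrow> (nat \<Rightarrow> nat set) \<Rightarrow> (nat \<Rightarrow> nat set) \<Rightarrow> real" where
  "prob_X TYPE('a) K L NS NR DS RS RD =
     real (card {(C, G) \<in> (outcomes K L NS NR RS :: ('a mat \<times> (nat \<Rightarrow> 'a mat)) set).
                   (let CD = dest_mat K L DS RS RD C G in vec_space.rank (dim_row CD) CD = K)})
     / real (card (outcomes K L NS NR RS :: ('a mat \<times> (nat \<Rightarrow> 'a mat)) set))"

end

(* Let V_D be the
   kernel of the rows of C received directly by D and V_S <= V_D the kernel of all rows of C that
   reach D or a relay.  Every recoded row is a combination of relayed rows, so ker C_D contains V_S
   and equals the part of V_D killed by the m' recoded rows; full rank therefore forces V_S = 0 and forces the
   recoded rows, read as random functionals on V_D, to cut V_D down to 0.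
   A uniform functional on a d-dimensional space vanishes with probability q^-d and otherwise cuts
   the dimension by one; a recoded functional g (M x) vanishes at least as often, which can only
   hurt.  Iterating, the recoded rows cut V_D down to 0 with probability at most P(m', dim V_D),
   and the m - m_RD source rows that reach a relay but not D cut it down to V_S = 0 with
   probability exactly P(m - m_RD, dim V_D).  Finally
   dim V_D = K - rank of a uniform m_D x K matrix, distributed according to P_r(m_D, K), and
   summing over this rank gives P^(2). *)
theory Submission
  imports Defs Berlekamp_Zassenhaus.Berlekamp_Type_Based
begin

lemma two_le_card_field: "2 \<le> CARD('a::{field,finite})"
proof -
  have "card {0::'a, 1} \<le> CARD('a)" by (rule card_mono) auto
  then show ?thesis by simp
qed

lemma sum_if_mem_eq:
  fixes a b :: "'b::comm_semiring_1"
  assumes "finite A" "B \<subseteq> A"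
  shows "(\<Sum>x\<in>A. if x \<in> B then a else b) = of_nat (card B) * a + of_nat (card (A - B)) * b"
proof -
  have "A \<inter> {x. x \<in> B} = B" "A \<inter> - {x. x \<in> B} = A - B" using assms(2) by auto
  then show ?thesis using sum.If_cases[OF assms(1), of "\<lambda>x. x \<in> B" "\<lambda>_. a" "\<lambda>_. b"]
    by (simp add: mult.commute)
qed

lemma sum_card_Collect_swap:
  assumes "finite A" "finite B"
  shows "(\<Sum>a\<in>A. card {b\<in>B. P a b}) = (\<Sum>b\<in>B. card {a\<in>A. P a b})"
proof -
  have "(\<Sum>a\<in>A. card {b\<in>B. P a b}) = (\<Sum>a\<in>A. \<Sum>b\<in>B. if P a b then 1 else 0)"
    using assms(2) by (simp add: sum.inter_filter[symmetric])
  also have "\<dots> = (\<Sum>b\<in>B. \<Sum>a\<in>A. if P a b then 1 else 0)" by (rule sum.swap)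
  also have "\<dots> = (\<Sum>b\<in>B. card {a\<in>A. P a b})"
    using assms(1) by (simp add: sum.inter_filter[symmetric])
  finally show ?thesis .
qed

lemma sum_PiE_insert:
  assumes "i \<notin> I" "finite I"
  shows "(\<Sum>\<rho>\<in>PiE (insert i I) B. f \<rho>) = (\<Sum>v\<in>B i. \<Sum>\<rho>\<in>PiE I B. f (\<rho>(i := v)))"
proof -
  have "(\<Sum>\<rho>\<in>PiE (insert i I) B. f \<rho>) = (\<Sum>p\<in>B i \<times> PiE I B. f ((\<lambda>(v, \<rho>). \<rho>(i := v)) p))"
    unfolding PiE_insert_eq by (rule sum.reindex[OF inj_combinator[OF assms(1)], unfolded comp_def])
  then show ?thesis by (simp add: sum.cartesian_product split_def)
qed

lemma sum_PiE_Un: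
  fixes F :: "'a \<Rightarrow> 'c set"
  assumes "A \<inter> B = {}" "finite A" "finite B"
  shows "(\<Sum>\<rho>\<in>PiE (A \<union> B) F. f \<rho>)
    = (\<Sum>\<rho>\<^sub>1\<in>PiE A F. \<Sum>\<rho>\<^sub>2\<in>PiE B F. f (\<lambda>i. if i \<in> A then \<rho>\<^sub>1 i else \<rho>\<^sub>2 i))"
proof -
  define merge where "merge p = (\<lambda>i. if i \<in> A then fst p i else snd p i)"
    for p :: "('a \<Rightarrow> 'c) \<times> ('a \<Rightarrow> 'c)"
  have merge_restrict: "merge (restrict \<rho> A, restrict \<rho> B) = \<rho>" if "\<rho> \<in> PiE (A \<union> B) F" for \<rho>
  proof (rule ext)
    fix i
    show "merge (restrict \<rho> A, restrict \<rho> B) i = \<rho> i"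
      using that PiE_arb[OF that] by (cases "i \<in> A"; cases "i \<in> B") (simp_all add: merge_def)
  qed
  have restrict_merge: "(restrict (merge (\<rho>\<^sub>1, \<rho>\<^sub>2)) A, restrict (merge (\<rho>\<^sub>1, \<rho>\<^sub>2)) B) = (\<rho>\<^sub>1, \<rho>\<^sub>2)"
    if "\<rho>\<^sub>1 \<in> PiE A F" "\<rho>\<^sub>2 \<in> PiE B F" for \<rho>\<^sub>1 \<rho>\<^sub>2
  proof -
    have "restrict (merge (\<rho>\<^sub>1, \<rho>\<^sub>2)) A i = \<rho>\<^sub>1 i" "restrict (merge (\<rho>\<^sub>1, \<rho>\<^sub>2)) B i = \<rho>\<^sub>2 i" for i
      using PiE_arb[OF that(1)] PiE_arb[OF that(2)] assms(1) by (auto simp: merge_def)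
    then show ?thesis by auto
  qed
  have "(\<Sum>\<rho>\<in>PiE (A \<union> B) F. f \<rho>) = (\<Sum>p\<in>PiE A F \<times> PiE B F. f (merge p))"
  proof (rule sum.reindex_bij_witness[where j = "\<lambda>\<rho>. (restrict \<rho> A, restrict \<rho> B)" and i = merge])
    show "merge p \<in> PiE (A \<union> B) F" if "p \<in> PiE A F \<times> PiE B F" for p
      using that by (auto simp: merge_def PiE_iff extensional_def)
    show "(restrict \<rho> A, restrict \<rho> B) \<in> PiE A F \<times> PiE B F" if "\<rho> \<in> PiE (A \<union> B) F" for \<rho>
      using that by auto
  qed (use merge_restrict restrict_merge in auto)
  then show ?thesis by (simp add: sum.cartesian_product merge_def split_def)
qed

definition mat_rows :: "nat \<Rightarrow> 'a mat \<Rightarrow> nat \<Rightarrow> 'a vec" where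
  "mat_rows nr A = (\<lambda>i\<in>{..<nr}. row A i)"

lemma bij_betw_mat_rows:
  fixes nr nc :: nat
  shows "bij_betw (mat_rows nr) (carrier_mat nr nc :: 'a mat set) (\<Pi>\<^sub>E i\<in>{..<nr}. carrier_vec nc)"
proof (rule bij_betwI[where g = "\<lambda>\<rho>. mat nr nc (\<lambda>(i, j). \<rho> i $ j)"])
  show "mat_rows nr \<in> carrier_mat nr nc \<rightarrow> (\<Pi>\<^sub>E i\<in>{..<nr}. carrier_vec nc)"
    unfolding mat_rows_def by (intro Pi_I iffD2[OF restrict_PiE_iff]) auto
  show "(\<lambda>\<rho>. mat nr nc (\<lambda>(i, j). \<rho> i $ j)) \<in> (\<Pi>\<^sub>E i\<in>{..<nr}. carrier_vec nc) \<rightarrow> carrier_mat nr nc"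
    by (intro Pi_I mat_carrier)
  show "mat nr nc (\<lambda>(i, j). mat_rows nr A i $ j) = A" if "A \<in> carrier_mat nr nc" for A :: "'a mat"
    using that by (intro eq_matI) (simp_all add: mat_rows_def)
  show "mat_rows nr (mat nr nc (\<lambda>(i, j). \<rho> i $ j)) = \<rho>"
    if \<rho>: "\<rho> \<in> (\<Pi>\<^sub>E i\<in>{..<nr}. carrier_vec nc)" for \<rho> :: "nat \<Rightarrow> 'a vec"
  proof (rule ext)
    fix i
    show "mat_rows nr (mat nr nc (\<lambda>(i, j). \<rho> i $ j)) i = \<rho> i"
    proof (cases "i < nr")
      case True
      then have "\<rho> i \<in> carrier_vec nc" using \<rho> by auto
      with True show ?thesis by (intro eq_vecI) (simp_all add: mat_rows_def)
    qed (use PiE_arb[OF \<rho>] in \<open>simp add: mat_rows_def\<close>)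
  qed
qed

lemma finite_carrier_mat: "finite (carrier_mat nr nc :: 'a::finite mat set)"
proof -
  have "finite (\<Pi>\<^sub>E i\<in>{..<nr}. carrier_vec nc :: 'a vec set)" by (intro finite_PiE) auto
  then show ?thesis using bij_betw_finite[OF bij_betw_mat_rows] by blast
qed

lemma card_carrier_mat: "card (carrier_mat nr nc :: 'a::finite mat set) = CARD('a) ^ (nc * nr)"
proof -
  have "card (carrier_mat nr nc :: 'a mat set) = card (\<Pi>\<^sub>E i\<in>{..<nr}. carrier_vec nc :: 'a vec set)"
    by (rule bij_betw_same_card[OF bij_betw_mat_rows])
  then show ?thesis by (simp add: card_PiE card_carrier_vec power_mult)
qed

section \<open>The rank probabilities\<close>

lemma Pfull_eq_0: "a < b \<Longrightarrow> Pfull q a b = 0"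
  unfolding Pfull_def by (rule prod_zero) (auto intro!: bexI[of _ a])

lemma Pfull_0_left: "Pfull q 0 c = (if c = 0 then 1 else 0)"
  by (cases c) (simp add: Pfull_def, simp add: Pfull_eq_0)

lemma Pfull_nonneg:
  assumes "1 \<le> q"
  shows "0 \<le> Pfull q a b"
proof (cases "b \<le> a")
  case True
  have "real q powi (int i - int a) \<le> real q powi 0" if "i < b" for i
    using assms that True by (intro power_int_increasing) auto
  then show ?thesis unfolding Pfull_def by (intro prod_nonneg) auto
qed (simp add: Pfull_eq_0)

lemma Pfull_antimono:
  assumes "1 \<le> q"
  shows "Pfull q a b \<le> Pfull q a (b - 1)"
proof (cases b)
  case (Suc c)
  show ?thesis
  proof (cases "c < a")
    case True
    have "0 \<le> real q powi (int c - int a)" using assms by simp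
    then have "Pfull q a c * (1 - real q powi (int c - int a)) \<le> Pfull q a c"
      using Pfull_nonneg[OF assms] by (simp add: mult_left_le)
    then show ?thesis using Suc by (simp add: Pfull_def)
  qed (use Suc assms in \<open>simp add: Pfull_eq_0 Pfull_nonneg\<close>)
qed simp

text \<open>A random functional on a \<open>c\<close>-dimensional space vanishes with probability \<open>q\<^sup>-\<^sup>c\<close>;
  otherwise the remaining \<open>a\<close> functionals only have to be injective on a hyperplane.\<close>
lemma Pfull_Suc_rows:
  assumes "1 \<le> q"
  shows "real q ^ c * Pfull q (Suc a) c = Pfull q a c + (real q ^ c - 1) * Pfull q a (c - 1)"
proof (cases c)
  case (Suc d)
  define x where "x = real q"
  have x: "x \<noteq> 0" using assms by (simp add: x_def)
  have rows: "Pfull q (Suc a) (Suc d) = (1 - x powi (- 1 - int a)) * Pfull q a d"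
    unfolding Pfull_def x_def by (simp add: prod.lessThan_Suc_shift del: prod.lessThan_Suc)
  have cols: "Pfull q a (Suc d) = Pfull q a d * (1 - x powi (int d - int a))"
    by (simp add: Pfull_def x_def)
  have "x powi (int d - int a) = x ^ Suc d * x powi (- 1 - int a)"
    using x by (simp add: power_int_add[symmetric] flip: power_int_of_nat)
  then show ?thesis unfolding Suc x_def[symmetric] rows cols by (simp add: algebra_simps)
qed (simp add: Pfull_def)

lemma Prank_eq_0: "a < r \<Longrightarrow> Prank q r a b = 0"
  unfolding Prank_def by (simp add: prod_zero_iff) (auto intro!: bexI[of _ a])

lemma Prank_0_rows: "Prank q r 0 b = (if r = 0 then 1 else 0)"
  by (cases r) (simp add: Prank_def, simp add: Prank_eq_0)

lemma Prank_eq_prod: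
  fixes q :: nat
  assumes "0 < q"
  defines "x \<equiv> real q"
  shows "Prank q r a b
    = (\<Prod>i<r. x ^ a - x ^ i) * (\<Prod>i<r. (x ^ (b - i) - 1) / (x ^ (r - i) - 1)) / x ^ (a * b)"
proof -
  have x: "0 < x" using assms by (simp add: x_def)
  have "1 - x powi (int i - int a) = (x ^ a - x ^ i) / x ^ a" for i
    using x by (simp add: power_int_diff field_simps)
  then have rows: "(\<Prod>i<r. 1 - x powi (int i - int a)) = (\<Prod>i<r. x ^ a - x ^ i) / x ^ (a * r)"
    by (simp add: prod_dividef power_mult)
  have "x powi (- (int a * (int b - int r))) = x powi (int (a * r) - int (a * b))"
    by (simp add: algebra_simps)
  also have "\<dots> = x ^ (a * r) / x ^ (a * b)"
    using x by (simp only: power_int_diff[OF disjI1] power_int_of_nat)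
  finally have scale: "x powi (- (int a * (int b - int r))) = x ^ (a * r) / x ^ (a * b)" .
  show ?thesis unfolding Prank_def x_def[symmetric] rows scale using x by simp
qed

lemma Prank_0_Suc_rows:
  assumes "0 < q"
  shows "Prank q 0 (Suc a) b = Prank q 0 a b / real q ^ b"
  using assms by (simp add: Prank_eq_prod power_add)

text \<open>Appending a random row to a rank-\<open>s+1\<close> matrix keeps the rank with probability
  \<open>q\<^sup>s\<^sup>+\<^sup>1\<^sup>-\<^sup>b\<close>; appending it to a rank-\<open>s\<close> matrix raises the rank with probability \<open>1 - q\<^sup>s\<^sup>-\<^sup>b\<close>.\<close>
lemma Prank_Suc_rows:
  assumes "1 < q" and "s < b"
  shows "Prank q (Suc s) (Suc a) b
    = Prank q (Suc s) a b / real q ^ (b - Suc s) + (1 - 1 / real q ^ (b - s)) * Prank q s a b"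
proof -
  define x where "x = real q"
  have x: "1 < x" using assms by (simp add: x_def)
  have q0: "0 < q" using assms(1) by simp
  define T where "T = x ^ (b - Suc s)"
  have T: "0 < T" "x ^ (b - s) = x * T" "x ^ b = x ^ s * (x * T)"
    using x assms(2) by (simp_all add: T_def Suc_diff_Suc flip: power_Suc power_add)
  define Y where "Y = x ^ (a * b)"
  have Y: "0 < Y" "x ^ (Suc a * b) = x ^ s * (x * T) * Y"
    using x by (simp_all add: Y_def T power_add)
  define P where "P = (\<Prod>i<s. x ^ a - x ^ i)"
  define G where "G = (\<Prod>i<s. (x ^ (b - i) - 1) / (x ^ (s - i) - 1))"
  define H where "H = G * (x ^ (b - s) - 1) / (x ^ Suc s - 1)"
  have "x ^ Suc a - x ^ Suc i = x * (x ^ a - x ^ i)" for i by (simp add: algebra_simps)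
  then have P_rows: "(\<Prod>i<Suc s. x ^ Suc a - x ^ i) = (x ^ Suc a - 1) * (x ^ s * P)"
    by (simp add: prod.lessThan_Suc_shift P_def prod.distrib del: prod.lessThan_Suc power_Suc)
  have P_rank: "(\<Prod>i<Suc s. x ^ a - x ^ i) = P * (x ^ a - x ^ s)"
    by (simp add: P_def)
  have "(\<Prod>i<Suc s. x ^ (b - i) - 1) = (\<Prod>i<s. x ^ (b - i) - 1) * (x ^ (b - s) - 1)"
    by simp
  moreover have "(\<Prod>i<Suc s. x ^ (Suc s - i) - 1) = (x ^ Suc s - 1) * (\<Prod>i<s. x ^ (s - i) - 1)"
    by (simp add: prod.lessThan_Suc_shift del: prod.lessThan_Suc)
  ultimately have G_rank: "(\<Prod>i<Suc s. (x ^ (b - i) - 1) / (x ^ (Suc s - i) - 1)) = H"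
    by (simp add: prod_dividef G_def H_def)
  have "x ^ Suc s - 1 \<noteq> 0" "x * T - 1 \<noteq> 0"
    using one_less_power[OF x, of "Suc s"] one_less_power[OF x, of "b - s"] assms(2) T(2) by auto
  then have GH: "(1 - 1 / (x * T)) * G = H * (x ^ Suc s - 1) / (x * T)"
    using T(1) x by (simp add: H_def T(2) field_simps)
  have L: "Prank q (Suc s) (Suc a) b = (x ^ Suc a - 1) * P * H / ((x * T) * Y)"
    using T(1) x unfolding Prank_eq_prod[OF q0] x_def[symmetric] P_rows G_rank Y(2) by simp
  have M: "Prank q (Suc s) a b = P * (x ^ a - x ^ s) * H / Y"
    unfolding Prank_eq_prod[OF q0] x_def[symmetric] P_rank G_rank Y_def by simp
  have "(1 - 1 / (x * T)) * Prank q s a b = P * ((1 - 1 / (x * T)) * G) / Y"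
    unfolding Prank_eq_prod[OF q0] x_def[symmetric]
    unfolding P_def[symmetric] G_def[symmetric] Y_def[symmetric]
    by (simp add: ac_simps)
  then have R: "(1 - 1 / (x * T)) * Prank q s a b = P * H * (x ^ Suc s - 1) / ((x * T) * Y)"
    unfolding GH by simp
  show ?thesis
    unfolding x_def[symmetric] T_def[symmetric] T(2) L M R
    using T(1) Y(1) x by (simp add: field_simps)
qed

lemma P2_eq_sum:
  "P2 q (m\<^sub>1 + m\<^sub>1\<^sub>2) (m\<^sub>2 + m\<^sub>1\<^sub>2) m\<^sub>1\<^sub>2 K
    = (\<Sum>c\<le>K. Pfull q m\<^sub>1 c * Pfull q m\<^sub>2 c * Prank q (K - c) m\<^sub>1\<^sub>2 K)"
proof -
  let ?t = "\<lambda>i. Prank q i m\<^sub>1\<^sub>2 K * Pfull q m\<^sub>1 (K - i) * Pfull q m\<^sub>2 (K - i)"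
  let ?I = "{i. i \<le> min m\<^sub>1\<^sub>2 K \<and> int K - int m\<^sub>1 \<le> int i \<and> int K - int m\<^sub>2 \<le> int i}"
  have "P2 q (m\<^sub>1 + m\<^sub>1\<^sub>2) (m\<^sub>2 + m\<^sub>1\<^sub>2) m\<^sub>1\<^sub>2 K = sum ?t ?I"
    by (simp add: P2_def)
  also have "\<dots> = sum ?t {0..K}"
  proof (rule sum.mono_neutral_left)
    show "\<forall>i\<in>{0..K} - ?I. ?t i = 0"
    proof
      fix i assume "i \<in> {0..K} - ?I"
      then consider "m\<^sub>1\<^sub>2 < i" | "m\<^sub>1 < K - i" | "m\<^sub>2 < K - i" by fastforce
      then show "?t i = 0" by cases (simp_all add: Prank_eq_0 Pfull_eq_0)
    qed
  qed auto
  also have "\<dots> = (\<Sum>c\<le>K. Pfull q m\<^sub>1 c * Pfull q m\<^sub>2 c * Prank q (K - c) m\<^sub>1\<^sub>2 K)"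
    by (subst sum.atLeastAtMost_rev) (simp add: atLeast0AtMost ac_simps)
  finally show ?thesis .
qed

section \<open>Subspaces over a finite field\<close>

definition vec_subspace :: "nat \<Rightarrow> 'a::field vec set \<Rightarrow> bool" where
  "vec_subspace n W \<longleftrightarrow> W \<subseteq> carrier_vec n \<and> 0\<^sub>v n \<in> W
     \<and> (\<forall>x\<in>W. \<forall>y\<in>W. x + y \<in> W) \<and> (\<forall>a. \<forall>x\<in>W. a \<cdot>\<^sub>v x \<in> W)"

lemma vec_subspace_carrier_vec: "vec_subspace n (carrier_vec n)"
  by (auto simp: vec_subspace_def)

lemma finite_vec_subspace:
  assumes "vec_subspace n (W :: 'a::{field,finite} vec set)"
  shows "finite W"
  using assms finite_carrier_vec[of n] by (auto simp: vec_subspace_def intro: finite_subset)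

lemma card_vec_subspace_kernel:
  fixes W :: "'a::{field,finite} vec set"
  assumes W: "vec_subspace n W"
    and add: "\<And>x y. x \<in> W \<Longrightarrow> y \<in> W \<Longrightarrow> \<phi> (x + y) = \<phi> x + \<phi> y"
    and smult: "\<And>a x. x \<in> W \<Longrightarrow> \<phi> (a \<cdot>\<^sub>v x) = a * \<phi> x"
    and u: "u \<in> W" "\<phi> u \<noteq> 0"
  shows "card W = card {x\<in>W. \<phi> x = 0} * CARD('a)"
proof -
  let ?Z = "{x\<in>W. \<phi> x = 0}"
  have carrier: "W \<subseteq> carrier_vec n" and add_smult: "\<And>v a. v \<in> W \<Longrightarrow> v + a \<cdot>\<^sub>v u \<in> W"
    using W u(1) by (auto simp: vec_subspace_def)
  have cancel: "(v + a \<cdot>\<^sub>v u) + (- a) \<cdot>\<^sub>v u = v" if "v \<in> W" for v a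
  proof -
    have "v \<in> carrier_vec n" "u \<in> carrier_vec n" using that u(1) carrier by auto
    then show ?thesis by (intro eq_vecI) auto
  qed
  have \<phi>_shift: "\<phi> (v + a \<cdot>\<^sub>v u) = \<phi> v + a * \<phi> u" if "v \<in> W" for v a
  proof -
    have "a \<cdot>\<^sub>v u \<in> W" using W u(1) by (simp add: vec_subspace_def)
    then show ?thesis using add[OF that] smult[OF u(1)] by simp
  qed
  define c where "c w = \<phi> w / \<phi> u" for w
  define g where "g w = (w + (- c w) \<cdot>\<^sub>v u, c w)" for w
  have "bij_betw (\<lambda>(z, a). z + a \<cdot>\<^sub>v u) (?Z \<times> UNIV) W"
  proof (rule bij_betwI[where g = g])
    show "(\<lambda>(z, a). z + a \<cdot>\<^sub>v u) \<in> ?Z \<times> UNIV \<rightarrow> W"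
      using add_smult by auto
    show "g \<in> W \<rightarrow> ?Z \<times> UNIV"
    proof
      fix w assume w: "w \<in> W"
      have "\<phi> (w + (- c w) \<cdot>\<^sub>v u) = 0" using \<phi>_shift[OF w] u(2) by (simp add: c_def)
      then show "g w \<in> ?Z \<times> UNIV" using add_smult[OF w] by (simp add: g_def)
    qed
    show "g ((\<lambda>(z, a). z + a \<cdot>\<^sub>v u) p) = p" if hp: "p \<in> ?Z \<times> UNIV" for p
    proof -
      obtain z a where p: "p = (z, a)" "z \<in> W" "\<phi> z = 0" using hp by auto
      have "c (z + a \<cdot>\<^sub>v u) = a" using \<phi>_shift[OF p(2)] p(3) u(2) by (simp add: c_def)
      then show ?thesis using cancel[OF p(2)] p(1) by (simp add: g_def)
    qed
    show "(\<lambda>(z, a). z + a \<cdot>\<^sub>v u) (g w) = w" if "w \<in> W" for w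
      using cancel[OF that, of "- c w"] by (simp add: g_def)
  qed
  then have "card (?Z \<times> (UNIV :: 'a set)) = card W" by (rule bij_betw_same_card)
  then show ?thesis by (simp add: card_cartesian_product)
qed

lemma scalar_prod_mult_mat_vec_add:
  fixes M :: "'a::field mat"
  assumes "M \<in> carrier_mat m n" "g \<in> carrier_vec m" "x \<in> carrier_vec n" "y \<in> carrier_vec n"
  shows "g \<bullet> (M *\<^sub>v (x + y)) = g \<bullet> (M *\<^sub>v x) + g \<bullet> (M *\<^sub>v y)"
  using assms by (simp add: mult_add_distrib_mat_vec scalar_prod_add_distrib[of g m])

lemma scalar_prod_mult_mat_vec_smult:
  fixes M :: "'a::field mat"
  assumes "M \<in> carrier_mat m n" "g \<in> carrier_vec m" "x \<in> carrier_vec n"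
  shows "g \<bullet> (M *\<^sub>v (a \<cdot>\<^sub>v x)) = a * (g \<bullet> (M *\<^sub>v x))"
  using assms by (simp add: mult_mat_vec[OF assms(1,3)])

definition slice :: "'a::field vec set \<Rightarrow> 'a mat \<Rightarrow> 'a vec \<Rightarrow> 'a vec set" where
  "slice W M g = {x\<in>W. g \<bullet> (M *\<^sub>v x) = 0}"

definition slices :: "'a::field vec set \<Rightarrow> 'a mat \<Rightarrow> 'b set \<Rightarrow> ('b \<Rightarrow> 'a vec) \<Rightarrow> 'a vec set" where
  "slices W M T \<rho> = {x\<in>W. \<forall>t\<in>T. \<rho> t \<bullet> (M *\<^sub>v x) = 0}"

lemma slices_empty [simp]: "slices W M {} \<rho> = W"
  by (simp add: slices_def)

lemma slices_insert: "slices W M (insert t T) \<rho> = slice (slices W M T \<rho>) M (\<rho> t)"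
  by (auto simp: slices_def slice_def)

lemma slices_fun_upd:
  "slices W M T (\<rho>(i := v))
    = (if i \<in> T then slices (slice W M v) M (T - {i}) \<rho> else slices W M T \<rho>)"
  by (auto simp: slices_def slice_def)

lemma vec_subspace_slices:
  assumes W: "vec_subspace n W" and M: "M \<in> carrier_mat m n" and \<rho>: "\<rho> \<in> T \<rightarrow> carrier_vec m"
  shows "vec_subspace n (slices W M T \<rho>)"
proof -
  have carrier: "W \<subseteq> carrier_vec n" using W by (simp add: vec_subspace_def)
  have \<rho>t: "\<rho> t \<in> carrier_vec m" if "t \<in> T" for t using \<rho> that by auto
  have "x + y \<in> slices W M T \<rho>" if x: "x \<in> slices W M T \<rho>" and y: "y \<in> slices W M T \<rho>" for x y
  proof -
    have "x \<in> W" "y \<in> W" using x y by (auto simp: slices_def)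
    then have "x + y \<in> W" "x \<in> carrier_vec n" "y \<in> carrier_vec n"
      using W carrier by (auto simp: vec_subspace_def)
    then show ?thesis using x y M \<rho>t by (auto simp: slices_def scalar_prod_mult_mat_vec_add)
  qed
  moreover have "a \<cdot>\<^sub>v x \<in> slices W M T \<rho>" if x: "x \<in> slices W M T \<rho>" for a x
  proof -
    have "x \<in> W" using x by (auto simp: slices_def)
    then have "a \<cdot>\<^sub>v x \<in> W" "x \<in> carrier_vec n" using W carrier by (auto simp: vec_subspace_def)
    then show ?thesis using x M \<rho>t by (auto simp: slices_def scalar_prod_mult_mat_vec_smult)
  qed
  moreover have "0\<^sub>v n \<in> slices W M T \<rho>"
  proof -
    have "M *\<^sub>v 0\<^sub>v n = 0\<^sub>v m" using M by (intro eq_vecI) auto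
    then show ?thesis using W \<rho>t by (auto simp: slices_def vec_subspace_def)
  qed
  ultimately show ?thesis using carrier by (auto simp: vec_subspace_def slices_def)
qed

lemma vec_subspace_slice:
  assumes "vec_subspace n W" "M \<in> carrier_mat m n" "g \<in> carrier_vec m"
  shows "vec_subspace n (slice W M g)"
proof -
  have "slice W M g = slices W M {()} (\<lambda>_. g)" by (simp add: slice_def slices_def)
  moreover have "(\<lambda>_. g) \<in> {()} \<rightarrow> carrier_vec m" using assms(3) by simp
  ultimately show ?thesis using vec_subspace_slices[OF assms(1,2)] by metis
qed

lemma card_slice:
  fixes W :: "'a::{field,finite} vec set"
  assumes W: "vec_subspace n W" and M: "M \<in> carrier_mat m n" and g: "g \<in> carrier_vec m"
    and u: "u \<in> W" "g \<bullet> (M *\<^sub>v u) \<noteq> 0"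
  shows "card W = card (slice W M g) * CARD('a)"
proof -
  have carrier: "W \<subseteq> carrier_vec n" using W by (simp add: vec_subspace_def)
  show ?thesis unfolding slice_def
  proof (rule card_vec_subspace_kernel[where \<phi> = "\<lambda>x. g \<bullet> (M *\<^sub>v x)", OF W _ _ u])
    show "g \<bullet> (M *\<^sub>v (x + y)) = g \<bullet> (M *\<^sub>v x) + g \<bullet> (M *\<^sub>v y)" if "x \<in> W" "y \<in> W" for x y
      using that carrier by (intro scalar_prod_mult_mat_vec_add[OF M g]) auto
    show "g \<bullet> (M *\<^sub>v (a \<cdot>\<^sub>v x)) = a * (g \<bullet> (M *\<^sub>v x))" if "x \<in> W" for a x
      using that carrier by (intro scalar_prod_mult_mat_vec_smult[OF M g]) auto
  qed
qed

text \<open>Coordinate slices cut a subspace down to zero one hyperplane at a time, and each cut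
  either keeps the subspace or divides its cardinality by the field size.\<close>
lemma card_vec_subspace_power:
  fixes W :: "'a::{field,finite} vec set"
  assumes W: "vec_subspace n W"
  shows "\<exists>d. card W = CARD('a) ^ d"
proof -
  define Z where "Z k = slices W (1\<^sub>m n) {k..<n} (unit_vec n)" for k
  have Z_subspace: "vec_subspace n (Z k)" for k
    unfolding Z_def by (rule vec_subspace_slices[OF W]) auto
  have "\<exists>d. card (Z k) = CARD('a) ^ d" if "k \<le> n" for k
    using that
  proof (induction k)
    case 0
    have "Z 0 = {0\<^sub>v n}"
    proof
      show "Z 0 \<subseteq> {0\<^sub>v n}"
      proof
        fix x assume x: "x \<in> Z 0"
        then have "x \<in> carrier_vec n" using Z_subspace[of 0] by (auto simp: vec_subspace_def)
        with x show "x \<in> {0\<^sub>v n}" by (auto simp: Z_def slices_def intro!: eq_vecI)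
      qed
      show "{0\<^sub>v n} \<subseteq> Z 0" using Z_subspace[of 0] by (simp add: vec_subspace_def)
    qed
    then show ?case by (intro exI[of _ 0]) simp
  next
    case (Suc k)
    then obtain d where d: "card (Z k) = CARD('a) ^ d" by auto
    have "{k..<n} = insert k {Suc k..<n}" using Suc.prems by auto
    then have Zk: "Z k = slice (Z (Suc k)) (1\<^sub>m n) (unit_vec n k)"
      by (simp add: Z_def slices_insert)
    show ?case
    proof (cases "\<forall>x\<in>Z (Suc k). unit_vec n k \<bullet> (1\<^sub>m n *\<^sub>v x) = 0")
      case True
      then have "Z (Suc k) = Z k" unfolding Zk slice_def by auto
      then show ?thesis using d by auto
    next
      case False
      then obtain u where "u \<in> Z (Suc k)" "unit_vec n k \<bullet> (1\<^sub>m n *\<^sub>v u) \<noteq> 0" by auto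
      then have "card (Z (Suc k)) = card (Z k) * CARD('a)"
        unfolding Zk by (intro card_slice[OF Z_subspace]) (use Suc.prems in auto)
      then show ?thesis using d by (metis power_Suc2)
    qed
  qed
  moreover have "Z n = W" by (simp add: Z_def)
  ultimately show ?thesis by blast
qed

definition sdim :: "'a::finite vec set \<Rightarrow> nat" where
  "sdim W = (THE d. card W = CARD('a) ^ d)"

lemma sdim_eq:
  fixes W :: "'a::{field,finite} vec set"
  assumes "card W = CARD('a) ^ d"
  shows "sdim W = d"
proof -
  have "1 < CARD('a)" using two_le_card_field[where 'a = 'a] by simp
  then have "d' = d" if "card W = CARD('a) ^ d'" for d'
    using that assms by (simp add: power_inject_exp)
  then show ?thesis unfolding sdim_def using assms by (intro the_equality)
qed

lemma card_vec_subspace: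
  fixes W :: "'a::{field,finite} vec set"
  assumes "vec_subspace n W"
  shows "card W = CARD('a) ^ sdim W"
proof -
  obtain d where d: "card W = CARD('a) ^ d" using card_vec_subspace_power[OF assms] by blast
  show ?thesis unfolding sdim_eq[OF d] by (rule d)
qed

lemma sdim_carrier_vec [simp]: "sdim (carrier_vec n :: 'a::{field,finite} vec set) = n"
  by (rule sdim_eq) (simp add: card_carrier_vec)

lemma sdim_le:
  fixes W :: "'a::{field,finite} vec set"
  assumes W: "vec_subspace n W"
  shows "sdim W \<le> n"
proof -
  have "W \<subseteq> carrier_vec n" using W by (simp add: vec_subspace_def)
  then have "card W \<le> card (carrier_vec n :: 'a vec set)" by (rule card_mono[OF finite_carrier_vec])
  then have le: "CARD('a) ^ sdim W \<le> CARD('a) ^ n"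
    by (simp only: card_vec_subspace[OF W] card_carrier_vec)
  have "1 < CARD('a)" using two_le_card_field[where 'a = 'a] by simp
  from power_le_imp_le_exp[OF this le] show ?thesis .
qed

lemma sdim_slice:
  fixes W :: "'a::{field,finite} vec set"
  assumes W: "vec_subspace n W" and M: "M \<in> carrier_mat m n" and g: "g \<in> carrier_vec m"
  shows "sdim (slice W M g) = (if \<forall>x\<in>W. g \<bullet> (M *\<^sub>v x) = 0 then sdim W else sdim W - 1)"
proof (cases "\<forall>x\<in>W. g \<bullet> (M *\<^sub>v x) = 0")
  case True
  then have "slice W M g = W" by (auto simp: slice_def)
  then show ?thesis using True by simp
next
  case False
  then obtain u where "u \<in> W" "g \<bullet> (M *\<^sub>v u) \<noteq> 0" by auto
  then have "card W = CARD('a) ^ Suc (sdim (slice W M g))"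
    using card_slice[OF W M g] card_vec_subspace[OF vec_subspace_slice[OF W M g]] by simp
  then have "sdim W = Suc (sdim (slice W M g))" by (rule sdim_eq)
  then show ?thesis using False by simp
qed

lemma card_kernel_scalar_prod:
  fixes W :: "'a::{field,finite} vec set"
  assumes W: "vec_subspace n W" and g: "g \<in> carrier_vec n"
  shows "CARD('a) * card {x\<in>W. g \<bullet> x = 0}
    = (if \<forall>x\<in>W. g \<bullet> x = 0 then CARD('a) * card W else card W)"
proof (cases "\<forall>x\<in>W. g \<bullet> x = 0")
  case True
  then have "{x\<in>W. g \<bullet> x = 0} = W" by blast
  then show ?thesis using True by simp
next
  case False
  have carrier: "W \<subseteq> carrier_vec n" using W by (simp add: vec_subspace_def)
  then have "slice W (1\<^sub>m n) g = {x\<in>W. g \<bullet> x = 0}" by (auto simp: slice_def)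
  moreover obtain u where "u \<in> W" "g \<bullet> (1\<^sub>m n *\<^sub>v u) \<noteq> 0" using False carrier by auto
  ultimately have "card W = card {x\<in>W. g \<bullet> x = 0} * CARD('a)"
    using card_slice[OF W one_carrier_mat g] by simp
  then show ?thesis by (subst if_not_P[OF False]) (simp add: mult.commute)
qed

lemma all_scalar_prod_eq_0_iff:
  fixes x :: "'a::semiring_1 vec"
  assumes x: "x \<in> carrier_vec n"
  shows "(\<forall>g\<in>carrier_vec n. x \<bullet> g = 0) \<longleftrightarrow> x = 0\<^sub>v n"
proof
  assume "\<forall>g\<in>carrier_vec n. x \<bullet> g = 0"
  then have "x $ i = 0" if "i < n" for i
    using that scalar_prod_right_unit[OF that, of x] unit_vec_carrier[of n i] by metis
  then show "x = 0\<^sub>v n" using x by (intro eq_vecI) auto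
qed (simp add: x)

text \<open>Double counting of the pairs \<open>(g, x)\<close> with \<open>x \<in> W\<close> and \<open>g \<bullet> x = 0\<close>.\<close>
lemma card_orthogonal_complement:
  fixes W :: "'a::{field,finite} vec set"
  assumes W: "vec_subspace n W"
  shows "card {g\<in>carrier_vec n. \<forall>x\<in>W. g \<bullet> x = 0} * card W = CARD('a) ^ n"
proof -
  let ?q = "CARD('a)" and ?V = "carrier_vec n :: 'a vec set"
  let ?C = "{g\<in>?V. \<forall>x\<in>W. g \<bullet> x = 0}"
  have carrier: "W \<subseteq> ?V" and zero: "0\<^sub>v n \<in> W" using W by (auto simp: vec_subspace_def)
  have fin: "finite W" by (rule finite_vec_subspace[OF W])
  have count_g: "?q * card {g\<in>?V. g \<bullet> x = 0} = (if x \<in> {0\<^sub>v n} then ?q * ?q ^ n else ?q ^ n)"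
    if x: "x \<in> W" for x
  proof -
    have xV: "x \<in> ?V" using x carrier by auto
    then have "{g\<in>?V. g \<bullet> x = 0} = {g\<in>?V. x \<bullet> g = 0}"
      by (intro Collect_cong) (use comm_scalar_prod[OF _ xV] in metis)
    then show ?thesis
      using card_kernel_scalar_prod[OF vec_subspace_carrier_vec xV] all_scalar_prod_eq_0_iff[OF xV]
      by (simp add: card_carrier_vec)
  qed
  have "(\<Sum>g\<in>?V. ?q * card {x\<in>W. g \<bullet> x = 0}) = (\<Sum>x\<in>W. ?q * card {g\<in>?V. g \<bullet> x = 0})"
    using sum_card_Collect_swap[OF finite_carrier_vec fin] by (simp flip: sum_distrib_left)
  then have "(\<Sum>g\<in>?V. if g \<in> ?C then ?q * card W else card W)
      = (\<Sum>x\<in>W. if x \<in> {0\<^sub>v n} then ?q * ?q ^ n else ?q ^ n)"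
    using card_kernel_scalar_prod[OF W] count_g by (simp cong: sum.cong)
  then have count: "card ?C * (?q * card W) + card (?V - ?C) * card W
      = ?q * ?q ^ n + (card W - 1) * ?q ^ n"
    using sum_if_mem_eq[of ?V ?C "?q * card W" "card W"] zero
      sum_if_mem_eq[OF fin, of "{0\<^sub>v n}" "?q * ?q ^ n" "?q ^ n"]
    by simp
  have C_le: "card ?C \<le> ?q ^ n"
    using card_mono[OF finite_carrier_vec[of n], of ?C] by (auto simp: card_carrier_vec)
  have card_diff: "card (?V - ?C) = ?q ^ n - card ?C"
    using finite_subset[OF _ finite_carrier_vec[of n], of ?C]
    by (subst card_Diff_subset) (auto simp: card_carrier_vec)
  have W_pos: "1 \<le> card W" using fin zero by (simp add: Suc_le_eq card_gt_0_iff) blast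
  have "(int (card ?C) * int (card W) - int (?q ^ n)) * (int ?q - 1) = 0"
    using arg_cong[OF count, of int]
    unfolding card_diff of_nat_add of_nat_mult of_nat_diff[OF C_le] of_nat_diff[OF W_pos]
    by (simp add: algebra_simps)
  then show ?thesis using two_le_card_field[where 'a = 'a] by (simp flip: of_nat_mult)
qed

lemma vec_subspace_image:
  fixes M :: "'a::field mat"
  assumes W: "vec_subspace n W" and M: "M \<in> carrier_mat m n"
  shows "vec_subspace m ((*\<^sub>v) M ` W)"
proof -
  have carrier: "W \<subseteq> carrier_vec n" using W by (simp add: vec_subspace_def)
  have "M *\<^sub>v x + M *\<^sub>v y \<in> (*\<^sub>v) M ` W" if "x \<in> W" "y \<in> W" for x y
  proof -
    have "M *\<^sub>v (x + y) = M *\<^sub>v x + M *\<^sub>v y"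
      using that carrier by (intro mult_add_distrib_mat_vec[OF M]) auto
    moreover have "x + y \<in> W" using that W by (simp add: vec_subspace_def)
    ultimately show ?thesis by (metis image_eqI)
  qed
  moreover have "a \<cdot>\<^sub>v (M *\<^sub>v x) \<in> (*\<^sub>v) M ` W" if "x \<in> W" for a x
  proof -
    have "M *\<^sub>v (a \<cdot>\<^sub>v x) = a \<cdot>\<^sub>v (M *\<^sub>v x)" using that carrier by (intro mult_mat_vec[OF M]) auto
    moreover have "a \<cdot>\<^sub>v x \<in> W" using that W by (simp add: vec_subspace_def)
    ultimately show ?thesis by (metis image_eqI)
  qed
  moreover have "0\<^sub>v m \<in> (*\<^sub>v) M ` W"
  proof -
    have "M *\<^sub>v 0\<^sub>v n = 0\<^sub>v m" using M by (intro eq_vecI) auto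
    moreover have "0\<^sub>v n \<in> W" using W by (simp add: vec_subspace_def)
    ultimately show ?thesis by (metis image_eqI)
  qed
  moreover have "(*\<^sub>v) M ` W \<subseteq> carrier_vec m" using M carrier by auto
  ultimately show ?thesis unfolding vec_subspace_def by blast
qed

lemma card_annihilator_ge:
  fixes W :: "'a::{field,finite} vec set"
  assumes W: "vec_subspace n W" and M: "M \<in> carrier_mat m n"
  shows "CARD('a) ^ m \<le> card {g\<in>carrier_vec m. \<forall>x\<in>W. g \<bullet> (M *\<^sub>v x) = 0} * card W"
proof -
  let ?MW = "(*\<^sub>v) M ` W"
  let ?C = "{g\<in>carrier_vec m. \<forall>y\<in>?MW. g \<bullet> y = 0}"
  have eq: "{g\<in>carrier_vec m. \<forall>x\<in>W. g \<bullet> (M *\<^sub>v x) = 0} = ?C" by simp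
  have "CARD('a) ^ m = card ?C * card ?MW"
    by (rule card_orthogonal_complement[OF vec_subspace_image[OF W M], symmetric])
  also have "\<dots> \<le> card ?C * card W"
    by (rule mult_le_mono2[OF card_image_le[OF finite_vec_subspace[OF W]]])
  finally show ?thesis unfolding eq .
qed

section \<open>Random functionals\<close>

text \<open>A uniformly random functional \<open>x \<mapsto> g \<bullet> (M *\<^sub>v x)\<close> either vanishes on \<open>W\<close>, for the
  \<open>N\<close> vectors \<open>g\<close> of the annihilator, or cuts \<open>W\<close> down by one dimension.\<close>
lemma sum_sdim_slice:
  fixes W :: "'a::{field,finite} vec set" and h :: "nat \<Rightarrow> real"
  assumes W: "vec_subspace n W" and M: "M \<in> carrier_mat m n"
  defines "N \<equiv> real (card {g\<in>carrier_vec m. \<forall>x\<in>W. g \<bullet> (M *\<^sub>v x) = 0})"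
  defines "d \<equiv> sdim W" and "q \<equiv> real CARD('a)"
  shows "q ^ d * (\<Sum>g\<in>carrier_vec m. h (sdim (slice W M g)))
    = q ^ m * (h d + (q ^ d - 1) * h (d - 1)) + (N * q ^ d - q ^ m) * (h d - h (d - 1))"
proof -
  let ?V = "carrier_vec m :: 'a vec set"
  let ?C = "{g\<in>?V. \<forall>x\<in>W. g \<bullet> (M *\<^sub>v x) = 0}"
  have "(\<Sum>g\<in>?V. h (sdim (slice W M g))) = (\<Sum>g\<in>?V. if g \<in> ?C then h d else h (d - 1))"
    by (intro sum.cong) (simp_all add: sdim_slice[OF W M] d_def)
  also have "\<dots> = N * h d + real (card (?V - ?C)) * h (d - 1)"
    unfolding N_def by (rule sum_if_mem_eq) auto
  also have "real (card (?V - ?C)) = q ^ m - N"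
    using card_mono[OF finite_carrier_vec[of m], of ?C]
    by (subst card_Diff_subset) (auto simp: N_def q_def card_carrier_vec of_nat_diff
        intro: finite_subset[OF _ finite_carrier_vec])
  finally have S: "(\<Sum>g\<in>?V. h (sdim (slice W M g))) = N * h d + (q ^ m - N) * h (d - 1)" .
  show ?thesis unfolding S by (simp add: algebra_simps)
qed

lemma sum_Pfull_sdim_slice_le:
  fixes W :: "'a::{field,finite} vec set"
  assumes W: "vec_subspace n W" and M: "M \<in> carrier_mat m n"
  shows "(\<Sum>g\<in>carrier_vec m. Pfull CARD('a) k (sdim (slice W M g)))
    \<le> real CARD('a) ^ m * Pfull CARD('a) (Suc k) (sdim W)"
proof -
  let ?q = "real CARD('a)" and ?d = "sdim W" and ?h = "Pfull CARD('a) k"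
  let ?N = "real (card {g\<in>carrier_vec m. \<forall>x\<in>W. g \<bullet> (M *\<^sub>v x) = 0})"
  have q: "1 \<le> CARD('a)" using two_le_card_field[where 'a = 'a] by simp
  have "?q ^ m \<le> ?N * ?q ^ ?d"
    using card_annihilator_ge[OF W M] unfolding card_vec_subspace[OF W]
    by (simp flip: of_nat_power of_nat_mult)
  moreover have "?h ?d \<le> ?h (?d - 1)" by (rule Pfull_antimono[OF q])
  ultimately have "(?N * ?q ^ ?d - ?q ^ m) * (?h ?d - ?h (?d - 1)) \<le> 0"
    by (intro mult_nonneg_nonpos) auto
  then have "?q ^ ?d * (\<Sum>g\<in>carrier_vec m. ?h (sdim (slice W M g)))
      \<le> ?q ^ m * (?h ?d + (?q ^ ?d - 1) * ?h (?d - 1))"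
    using sum_sdim_slice[OF W M, of ?h] by simp
  also have "\<dots> = ?q ^ ?d * (?q ^ m * Pfull CARD('a) (Suc k) ?d)"
    using Pfull_Suc_rows[OF q, of ?d k] by simp
  finally show ?thesis using q by (simp add: mult_le_cancel_left_pos)
qed

lemma card_sdim_slice_eq:
  fixes W :: "'a::{field,finite} vec set"
  assumes W: "vec_subspace n W"
  defines "q \<equiv> real CARD('a)"
  shows "real (card {g\<in>carrier_vec n. sdim (slice W (1\<^sub>m n) g) = c})
    = (if sdim W = c then q ^ n / q ^ c else 0)
      + (if sdim W = Suc c then q ^ n - q ^ n / q ^ Suc c else 0)"
proof -
  let ?d = "sdim W" and ?h = "\<lambda>e. if e = c then 1 else 0 :: real"
  let ?C = "{g\<in>carrier_vec n. \<forall>x\<in>W. g \<bullet> (1\<^sub>m n *\<^sub>v x) = 0}"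
  have q: "0 < q" by (simp add: q_def)
  have carrier: "W \<subseteq> carrier_vec n" using W by (simp add: vec_subspace_def)
  have "1\<^sub>m n *\<^sub>v x = x" if "x \<in> W" for x using that carrier by auto
  then have "?C = {g\<in>carrier_vec n. \<forall>x\<in>W. g \<bullet> x = 0}" by simp
  then have "real (card ?C) * q ^ ?d = q ^ n"
    using card_orthogonal_complement[OF W] unfolding card_vec_subspace[OF W] q_def
    by (simp flip: of_nat_power of_nat_mult)
  then have "q ^ ?d * (\<Sum>g\<in>carrier_vec n. ?h (sdim (slice W (1\<^sub>m n) g)))
      = q ^ n * (?h ?d + (q ^ ?d - 1) * ?h (?d - 1))"
    using sum_sdim_slice[OF W one_carrier_mat, of ?h] unfolding q_def by simp
  moreover have "(\<Sum>g\<in>carrier_vec n. ?h (sdim (slice W (1\<^sub>m n) g)))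
      = real (card {g\<in>carrier_vec n. sdim (slice W (1\<^sub>m n) g) = c})"
    by (simp add: sum.inter_filter[symmetric])
  ultimately have "q ^ ?d * real (card {g\<in>carrier_vec n. sdim (slice W (1\<^sub>m n) g) = c})
      = q ^ n * (?h ?d + (q ^ ?d - 1) * ?h (?d - 1))"
    by simp
  then show ?thesis using q by (cases ?d) (auto simp: field_simps)
qed

lemma sum_Pfull_sdim_slices_le:
  fixes W :: "'a::{field,finite} vec set"
  assumes "finite I" "T \<subseteq> I" "vec_subspace n W" "M \<in> carrier_mat m n"
  shows "(\<Sum>\<rho>\<in>PiE I (\<lambda>_. carrier_vec m). Pfull CARD('a) k (sdim (slices W M T \<rho>)))
    \<le> real CARD('a) ^ (m * card I) * Pfull CARD('a) (k + card T) (sdim W)"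
  using assms
proof (induction I arbitrary: T W rule: finite_induct)
  case (insert i I)
  let ?q = "real CARD('a)" and ?V = "carrier_vec m :: 'a vec set" and ?P = "Pfull CARD('a)"
  have split: "(\<Sum>\<rho>\<in>PiE (insert i I) (\<lambda>_. ?V). ?P k (sdim (slices W M T \<rho>)))
      = (\<Sum>v\<in>?V. \<Sum>\<rho>\<in>PiE I (\<lambda>_. ?V). ?P k (sdim (slices W M T (\<rho>(i := v)))))"
    by (rule sum_PiE_insert[OF insert.hyps(2,1)])
  show ?case
  proof (cases "i \<in> T")
    case True
    have "finite T" using insert.prems(1) insert.hyps(1) by (auto intro: finite_subset)
    then have "0 < card T" using True by (auto simp: card_gt_0_iff)
    then have T: "T - {i} \<subseteq> I" "card T = Suc (card (T - {i}))"
      using True insert.prems(1) by auto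
    have "(\<Sum>v\<in>?V. \<Sum>\<rho>\<in>PiE I (\<lambda>_. ?V). ?P k (sdim (slices W M T (\<rho>(i := v)))))
        = (\<Sum>v\<in>?V. \<Sum>\<rho>\<in>PiE I (\<lambda>_. ?V). ?P k (sdim (slices (slice W M v) M (T - {i}) \<rho>)))"
      using True by (simp add: slices_fun_upd)
    also have "\<dots> \<le> (\<Sum>v\<in>?V. ?q ^ (m * card I) * ?P (k + card (T - {i})) (sdim (slice W M v)))"
      using vec_subspace_slice[OF insert.prems(2,3)]
      by (intro sum_mono insert.IH[OF T(1) _ insert.prems(3)])
    also have "\<dots> = ?q ^ (m * card I) * (\<Sum>v\<in>?V. ?P (k + card (T - {i})) (sdim (slice W M v)))"
      by (simp add: sum_distrib_left)
    also have "\<dots> \<le> ?q ^ (m * card I) * (?q ^ m * ?P (Suc (k + card (T - {i}))) (sdim W))"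
      by (intro mult_left_mono sum_Pfull_sdim_slice_le[OF insert.prems(2,3)]) simp
    also have "\<dots> = ?q ^ (m * card (insert i I)) * ?P (k + card T) (sdim W)"
      using insert.hyps T(2) by (simp add: power_add algebra_simps)
    finally show ?thesis unfolding split .
  next
    case False
    have "(\<Sum>v\<in>?V. \<Sum>\<rho>\<in>PiE I (\<lambda>_. ?V). ?P k (sdim (slices W M T (\<rho>(i := v)))))
        = ?q ^ m * (\<Sum>\<rho>\<in>PiE I (\<lambda>_. ?V). ?P k (sdim (slices W M T \<rho>)))"
      using False by (simp add: slices_fun_upd card_carrier_vec)
    also have "\<dots> \<le> ?q ^ m * (?q ^ (m * card I) * ?P (k + card T) (sdim W))"
      using False insert.prems by (intro mult_left_mono insert.IH) auto
    also have "\<dots> = ?q ^ (m * card (insert i I)) * ?P (k + card T) (sdim W)"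
      using insert.hyps by (simp add: power_add algebra_simps)
    finally show ?thesis unfolding split .
  qed
qed simp

lemma card_sdim_slices_insert:
  fixes n :: nat and I :: "'b set"
  assumes "finite I" "i \<notin> I"
  defines "V \<equiv> carrier_vec n :: 'a::{field,finite} vec set" and "q \<equiv> real CARD('a)"
  defines "N J e \<equiv> real (card {\<rho>\<in>PiE J (\<lambda>_. V). sdim (slices V (1\<^sub>m n) J \<rho>) = e})"
  shows "N (insert i I) c
    = q ^ n / q ^ c * N I c + (q ^ n - q ^ n / q ^ Suc c) * N I (Suc c)"
proof -
  let ?W = "\<lambda>\<rho>. slices V (1\<^sub>m n) I \<rho>"
  let ?PiE = "PiE I (\<lambda>_. V)"
  have fin: "finite (PiE J (\<lambda>_. V))" if "finite J" for J :: "'b set"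
    using that by (intro finite_PiE) (simp_all add: V_def)
  have "N (insert i I) c
      = (\<Sum>\<rho>\<in>PiE (insert i I) (\<lambda>_. V). if sdim (slices V (1\<^sub>m n) (insert i I) \<rho>) = c then 1 else 0)"
    using fin assms(1) by (simp add: N_def sum.inter_filter[symmetric])
  also have "\<dots> = (\<Sum>v\<in>V. \<Sum>\<rho>\<in>?PiE. if sdim (slice (?W \<rho>) (1\<^sub>m n) v) = c then 1 else 0)"
    using assms(2) by (simp add: sum_PiE_insert[OF assms(2,1)] slices_insert slices_fun_upd)
  also have "\<dots> = (\<Sum>\<rho>\<in>?PiE. real (card {v\<in>V. sdim (slice (?W \<rho>) (1\<^sub>m n) v) = c}))"
    by (subst sum.swap) (simp add: sum.inter_filter[symmetric] V_def)
  also have "\<dots> = (\<Sum>\<rho>\<in>?PiE. (if sdim (?W \<rho>) = c then q ^ n / q ^ c else 0)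
      + (if sdim (?W \<rho>) = Suc c then q ^ n - q ^ n / q ^ Suc c else 0))"
  proof (rule sum.cong)
    fix \<rho> assume "\<rho> \<in> ?PiE"
    then have "vec_subspace n (?W \<rho>)"
      unfolding V_def by (intro vec_subspace_slices vec_subspace_carrier_vec) auto
    then show "real (card {v\<in>V. sdim (slice (?W \<rho>) (1\<^sub>m n) v) = c})
      = (if sdim (?W \<rho>) = c then q ^ n / q ^ c else 0)
        + (if sdim (?W \<rho>) = Suc c then q ^ n - q ^ n / q ^ Suc c else 0)"
      unfolding V_def q_def by (rule card_sdim_slice_eq)
  qed simp
  also have "\<dots> = q ^ n / q ^ c * N I c + (q ^ n - q ^ n / q ^ Suc c) * N I (Suc c)"
    using fin[OF assms(1)] by (simp add: sum.distrib N_def sum.inter_filter[symmetric])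
  finally show ?thesis .
qed

lemma card_sdim_slices_eq:
  fixes n :: nat and I :: "'b set"
  assumes "finite I" "c \<le> n"
  shows "real (card {\<rho>\<in>PiE I (\<lambda>_. carrier_vec n :: 'a::{field,finite} vec set).
      sdim (slices (carrier_vec n) (1\<^sub>m n) I \<rho>) = c})
    = real CARD('a) ^ (n * card I) * Prank CARD('a) (n - c) (card I) n"
  using assms
proof (induction I arbitrary: c rule: finite_induct)
  case empty
  then show ?case by (cases "c = n") (simp_all add: Prank_0_rows)
next
  case (insert i I)
  let ?q = "real CARD('a)" and ?V = "carrier_vec n :: 'a vec set"
  define N where "N e = real (card {\<rho>\<in>PiE I (\<lambda>_. ?V). sdim (slices ?V (1\<^sub>m n) I \<rho>) = e})" for e
  have q: "1 < CARD('a)" using two_le_card_field[where 'a = 'a] by simp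
  have step: "real (card {\<rho>\<in>PiE (insert i I) (\<lambda>_. ?V). sdim (slices ?V (1\<^sub>m n) (insert i I) \<rho>) = c})
      = ?q ^ n / ?q ^ c * N c + (?q ^ n - ?q ^ n / ?q ^ Suc c) * N (Suc c)"
    unfolding N_def by (rule card_sdim_slices_insert[OF insert.hyps])
  have Nc: "N c = ?q ^ (n * card I) * Prank CARD('a) (n - c) (card I) n"
    unfolding N_def using insert.IH insert.prems .
  show ?case
  proof (cases "c < n")
    case True
    have NSc: "N (Suc c) = ?q ^ (n * card I) * Prank CARD('a) (n - Suc c) (card I) n"
      unfolding N_def using insert.IH True by simp
    have rec: "Prank CARD('a) (n - c) (Suc (card I)) n
        = Prank CARD('a) (n - c) (card I) n / ?q ^ c
          + (1 - 1 / ?q ^ Suc c) * Prank CARD('a) (n - Suc c) (card I) n"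
      using Prank_Suc_rows[OF q, of "n - Suc c" n "card I"] True by (simp add: Suc_diff_Suc)
    show ?thesis
      unfolding step Nc NSc card_insert_disjoint[OF insert.hyps] rec
      by (simp add: field_simps power_add)
  next
    case False
    then have c: "c = n" using insert.prems by simp
    have "sdim (slices ?V (1\<^sub>m n) I \<rho>) \<le> n" if "\<rho> \<in> PiE I (\<lambda>_. ?V)" for \<rho>
      using that by (intro sdim_le vec_subspace_slices vec_subspace_carrier_vec) auto
    then have empty: "{\<rho>\<in>PiE I (\<lambda>_. ?V). sdim (slices ?V (1\<^sub>m n) I \<rho>) = Suc n} = {}"
      by fastforce
    have NSc: "N (Suc c) = 0" unfolding N_def c empty by simp
    have "0 < CARD('a)" using q by simp
    then show ?thesis unfolding step Nc NSc card_insert_disjoint[OF insert.hyps]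
      by (simp add: c Prank_0_Suc_rows power_add)
  qed
qed

lemma sum_Pfull_sdim_slices_Un_le:
  fixes f :: "nat \<Rightarrow> real" and n :: nat and D B R :: "'b set"
  assumes fin: "finite D" "finite R" and disj: "D \<inter> R = {}" and B: "B \<subseteq> R"
    and f: "\<And>c. 0 \<le> f c"
  defines "V \<equiv> carrier_vec n :: 'a::{field,finite} vec set" and "q \<equiv> CARD('a)"
  shows "(\<Sum>\<rho>\<in>PiE (D \<union> R) (\<lambda>_. V).
      f (sdim (slices V (1\<^sub>m n) D \<rho>)) * Pfull q 0 (sdim (slices V (1\<^sub>m n) (D \<union> B) \<rho>)))
    \<le> real q ^ (n * card (D \<union> R)) * (\<Sum>c\<le>n. f c * Pfull q (card B) c * Prank q (n - c) (card D) n)"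
proof -
  let ?W = "\<lambda>\<rho>. slices V (1\<^sub>m n) D \<rho>"
  let ?F = "\<lambda>c. f c * Pfull q (card B) c"
  have W: "vec_subspace n (?W \<rho>)" if "\<rho> \<in> PiE D (\<lambda>_. V)" for \<rho>
    using that unfolding V_def by (intro vec_subspace_slices vec_subspace_carrier_vec) auto
  have merge: "slices V (1\<^sub>m n) D (\<lambda>i. if i \<in> D then \<rho>\<^sub>1 i else \<rho>\<^sub>2 i) = ?W \<rho>\<^sub>1"
    "slices V (1\<^sub>m n) (D \<union> B) (\<lambda>i. if i \<in> D then \<rho>\<^sub>1 i else \<rho>\<^sub>2 i) = slices (?W \<rho>\<^sub>1) (1\<^sub>m n) B \<rho>\<^sub>2"
    for \<rho>\<^sub>1 \<rho>\<^sub>2 :: "'b \<Rightarrow> 'a vec"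
    using disj B by (auto simp: slices_def)
  have "(\<Sum>\<rho>\<in>PiE (D \<union> R) (\<lambda>_. V).
      f (sdim (slices V (1\<^sub>m n) D \<rho>)) * Pfull q 0 (sdim (slices V (1\<^sub>m n) (D \<union> B) \<rho>)))
    = (\<Sum>\<rho>\<^sub>1\<in>PiE D (\<lambda>_. V). f (sdim (?W \<rho>\<^sub>1)) *
        (\<Sum>\<rho>\<^sub>2\<in>PiE R (\<lambda>_. V). Pfull q 0 (sdim (slices (?W \<rho>\<^sub>1) (1\<^sub>m n) B \<rho>\<^sub>2))))"
    by (simp add: sum_PiE_Un[OF disj fin] merge sum_distrib_left)
  also have "\<dots> \<le> (\<Sum>\<rho>\<^sub>1\<in>PiE D (\<lambda>_. V). f (sdim (?W \<rho>\<^sub>1)) *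
        (real q ^ (n * card R) * Pfull q (card B) (sdim (?W \<rho>\<^sub>1))))"
    using sum_Pfull_sdim_slices_le[OF fin(2) B W one_carrier_mat, where k = 0]
    by (intro sum_mono mult_left_mono f) (simp_all add: V_def q_def)
  also have "\<dots> = real q ^ (n * card R) * (\<Sum>\<rho>\<^sub>1\<in>PiE D (\<lambda>_. V). ?F (sdim (?W \<rho>\<^sub>1)))"
    by (simp add: sum_distrib_left ac_simps)
  also have "(\<Sum>\<rho>\<^sub>1\<in>PiE D (\<lambda>_. V). ?F (sdim (?W \<rho>\<^sub>1)))
      = (\<Sum>c\<le>n. real (card {\<rho>\<^sub>1\<in>PiE D (\<lambda>_. V). sdim (?W \<rho>\<^sub>1) = c}) * ?F c)"
    using fin(1) W sdim_le by (intro sum_fun_comp) (auto simp: V_def intro!: finite_PiE)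
  also have "\<dots> = (\<Sum>c\<le>n. real q ^ (n * card D) * (Prank q (n - c) (card D) n * ?F c))"
    using card_sdim_slices_eq[OF fin(1), where 'a = 'a and n = n]
    by (intro sum.cong) (simp_all add: V_def q_def)
  finally show ?thesis
    using fin disj by (simp add: card_Un_disjoint power_add sum_distrib_left algebra_simps)
qed

definition relay_slices ::
  "'a::field vec set \<Rightarrow> ('b \<Rightarrow> 'a mat) \<Rightarrow> ('b \<Rightarrow> nat set) \<Rightarrow> 'b set \<Rightarrow> ('b \<Rightarrow> 'a mat) \<Rightarrow> 'a vec set"
  where "relay_slices W M R J G = {x\<in>W. \<forall>j\<in>J. \<forall>t\<in>R j. row (G j) t \<bullet> (M j *\<^sub>v x) = 0}"

lemma relay_slices_insert:
  assumes "j \<notin> J" "R j \<subseteq> {..<nr}"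
  shows "relay_slices W M R (insert j J) (G(j := g))
    = relay_slices (slices W (M j) (R j) (mat_rows nr g)) M R J G"
  using assms by (auto simp: relay_slices_def slices_def mat_rows_def)

lemma sum_Pfull_sdim_relay_slices_le:
  fixes W :: "'a::{field,finite} vec set"
  assumes "finite J" and "\<And>j. j \<in> J \<Longrightarrow> M j \<in> carrier_mat (m j) n"
    and "\<And>j. j \<in> J \<Longrightarrow> R j \<subseteq> {..<nr}" and "vec_subspace n W"
  shows "(\<Sum>G\<in>PiE J (\<lambda>j. carrier_mat nr (m j)). Pfull CARD('a) k (sdim (relay_slices W M R J G)))
    \<le> real (card (PiE J (\<lambda>j. carrier_mat nr (m j) :: 'a mat set)))
      * Pfull CARD('a) (k + (\<Sum>j\<in>J. card (R j))) (sdim W)"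
  using assms
proof (induction J arbitrary: W rule: finite_induct)
  case (insert j J)
  let ?P = "Pfull CARD('a)" and ?G = "\<lambda>J. PiE J (\<lambda>j. carrier_mat nr (m j) :: 'a mat set)"
  let ?k = "k + (\<Sum>j\<in>J. card (R j))"
  let ?W = "\<lambda>g. slices W (M j) (R j) (mat_rows nr g)"
  have M: "M j \<in> carrier_mat (m j) n" and R: "R j \<subseteq> {..<nr}" using insert.prems by auto
  have sub: "vec_subspace n (?W g)" if "g \<in> carrier_mat nr (m j)" for g
    using that R by (intro vec_subspace_slices[OF insert.prems(3) M]) (auto simp: mat_rows_def)
  have "(\<Sum>G\<in>?G (insert j J). ?P k (sdim (relay_slices W M R (insert j J) G)))
      = (\<Sum>g\<in>carrier_mat nr (m j). \<Sum>G\<in>?G J. ?P k (sdim (relay_slices (?W g) M R J G)))"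
    by (simp add: sum_PiE_insert[OF insert.hyps(2,1)]
        relay_slices_insert[where R = R, OF insert.hyps(2) R])
  also have "\<dots> \<le> (\<Sum>g\<in>carrier_mat nr (m j). real (card (?G J)) * ?P ?k (sdim (?W g)))"
    using insert.IH insert.prems sub by (intro sum_mono) auto
  also have "\<dots> = real (card (?G J)) * (\<Sum>g\<in>carrier_mat nr (m j). ?P ?k (sdim (?W g)))"
    by (simp add: sum_distrib_left)
  also have "(\<Sum>g\<in>carrier_mat nr (m j). ?P ?k (sdim (?W g)))
      = (\<Sum>\<rho>\<in>PiE {..<nr} (\<lambda>_. carrier_vec (m j)). ?P ?k (sdim (slices W (M j) (R j) \<rho>)))"
    by (rule sum.reindex_bij_betw[OF bij_betw_mat_rows])
  also have "real (card (?G J)) * \<dots>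
      \<le> real (card (?G J)) * (real CARD('a) ^ (m j * nr) * ?P (?k + card (R j)) (sdim W))"
    using sum_Pfull_sdim_slices_le[OF _ R insert.prems(3) M, of ?k] by (intro mult_left_mono) auto
  also have "\<dots> = real (card (?G (insert j J))) * ?P (k + (\<Sum>j\<in>insert j J. card (R j))) (sdim W)"
    using insert.hyps by (simp add: card_PiE card_carrier_mat algebra_simps)
  finally show ?case .
qed (simp add: relay_slices_def)

section \<open>The relay network\<close>

lemma (in vec_space) rank_lt_if_not_distinct_cols:
  assumes A: "A \<in> carrier_mat n nc" and "\<not> distinct (cols A)"
  shows "rank A < nc"
proof -
  obtain S where S: "maximal S (\<lambda>T. T \<subseteq> set (cols A) \<and> lin_indpt T)"
    using maximal_exists[of "\<lambda>T. T \<subseteq> set (cols A) \<and> lin_indpt T" "card (set (cols A))" "{}"]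
    by (meson List.finite_set card_mono empty_iff empty_subsetI finite_lin_indpt2 rev_finite_subset)
  then have "card S \<le> card (set (cols A))" by (simp add: card_mono maximal_def)
  also have "\<dots> < length (cols A)"
    using assms(2) card_distinct card_length le_neq_implies_less by blast
  finally show ?thesis using rank_card_indpt[OF A S] A by simp
qed

lemma (in vec_space) full_rank_mult_vec_eq_0:
  assumes A: "A \<in> carrier_mat n nc" and r: "rank A = nc" and v: "v \<in> carrier_vec nc"
    and Av: "A *\<^sub>v v = 0\<^sub>v n"
  shows "v = 0\<^sub>v nc"
proof (rule ccontr)
  assume "v \<noteq> 0\<^sub>v nc"
  moreover have "distinct (cols A)" using rank_lt_if_not_distinct_cols[OF A] r by auto
  ultimately have "lin_dep (set (cols A))" by (rule lin_depI[OF A v _ Av])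
  moreover have "lin_indpt (set (cols A))" by (rule full_rank_lin_indpt[OF A r \<open>distinct (cols A)\<close>])
  ultimately show False by simp
qed

lemma dim_col_submatrix_UNIV [simp]: "dim_col (submatrix A I UNIV) = dim_col A"
  by (simp add: dim_submatrix)

lemma submatrix_mult_vec_eq_0:
  fixes A :: "'a::field mat"
  assumes x: "x \<in> carrier_vec (dim_col A)"
    and rows: "\<And>i. i \<in> I \<Longrightarrow> i < dim_row A \<Longrightarrow> row A i \<bullet> x = 0"
  shows "submatrix A I UNIV *\<^sub>v x = 0\<^sub>v (dim_row (submatrix A I UNIV))"
proof (rule eq_vecI)
  fix k assume "k < dim_vec (0\<^sub>v (dim_row (submatrix A I UNIV)) :: 'a vec)"
  then have k: "k < card {i. i < dim_row A \<and> i \<in> I}" by (simp add: dim_submatrix)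
  have "pick I k = pick {i. i < dim_row A \<and> i \<in> I} k" by (rule pick_reduce_set[OF k])
  also have "\<dots> \<in> {i. i < dim_row A \<and> i \<in> I}" by (rule pick_in_set) (use k in simp)
  finally have "row A (pick I k) \<bullet> x = 0" using rows by blast
  then show "(submatrix A I UNIV *\<^sub>v x) $ k = 0\<^sub>v (dim_row (submatrix A I UNIV)) $ k"
    using k by (simp add: dim_submatrix row_submatrix_UNIV)
qed simp

lemma append_rows_mult_vec_eq_0:
  fixes A B :: "'a::field mat"
  assumes "dim_col A = n" "dim_col B = n" "x \<in> carrier_vec n"
    and "A *\<^sub>v x = 0\<^sub>v (dim_row A)" "B *\<^sub>v x = 0\<^sub>v (dim_row B)"
  shows "(A @\<^sub>r B) *\<^sub>v x = 0\<^sub>v (dim_row (A @\<^sub>r B))"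
proof -
  have "A \<in> carrier_mat (dim_row A) n" "B \<in> carrier_mat (dim_row B) n" using assms(1,2) by auto
  from mat_mult_append[OF this assms(3)] show ?thesis
    using assms(4,5) by (auto simp: append_rows_def intro!: eq_vecI)
qed

lemma foldr_append_rows_mult_vec_eq_0:
  fixes B :: "'b \<Rightarrow> 'a::field mat"
  assumes "\<And>j. j \<in> set js \<Longrightarrow> dim_col (B j) = n \<and> B j *\<^sub>v x = 0\<^sub>v (dim_row (B j))"
    and x: "x \<in> carrier_vec n"
  defines "F \<equiv> foldr (\<lambda>j M. B j @\<^sub>r M) js (0\<^sub>m 0 n)"
  shows "dim_col F = n \<and> F *\<^sub>v x = 0\<^sub>v (dim_row F)"
  unfolding F_def using assms(1)
proof (induction js)
  case Nil
  show ?case by (auto intro!: eq_vecI)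
next
  case (Cons j js)
  then show ?case using append_rows_mult_vec_eq_0[OF _ _ x] by (simp add: append_rows_def)
qed

lemma scalar_prod_row_mult:
  assumes "G \<in> carrier_mat nr m" "C \<in> carrier_mat m n" "x \<in> carrier_vec n" "t < nr"
  shows "row (G * C) t \<bullet> x = row G t \<bullet> (C *\<^sub>v x)"
proof -
  have "row (G * C) t \<bullet> x = ((G * C) *\<^sub>v x) $ t"
    using assms by (intro index_mult_mat_vec[symmetric]) simp
  also have "\<dots> = (G *\<^sub>v (C *\<^sub>v x)) $ t" using assoc_mult_mat_vec[OF assms(1-3)] by simp
  also have "\<dots> = row G t \<bullet> (C *\<^sub>v x)" using assms by (intro index_mult_mat_vec) simp
  finally show ?thesis .
qed

locale erasure_pattern =
  fixes K L NS NR :: nat and DS :: "nat set" and RS RD :: "nat \<Rightarrow> nat set"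
  assumes DS_subset: "DS \<subseteq> {..<NS}"
    and RS_subset: "\<And>j. j < L \<Longrightarrow> RS j \<subseteq> {..<NS}"
    and RD_subset: "\<And>j. j < L \<Longrightarrow> RD j \<subseteq> {..<NR}"
begin

text \<open>In the notation of the paper, \<open>relay_only\<close> consists of the \<open>m - m\<^sub>R\<^sub>D\<close> packets that reach
  a relay but not D, \<open>dest_kernel C G\<close> is the kernel of \<open>C\<^sub>D\<close>, \<open>direct_kernel C\<close> that of the
  \<open>m\<^sub>D\<close> rows received directly and \<open>source_kernel C\<close> that of all rows reaching D or a relay.\<close>

definition relay_only :: "nat set" where
  "relay_only = (\<Union>j<L. RS j) - DS"

definition direct_kernel :: "'a::field mat \<Rightarrow> 'a vec set" where
  "direct_kernel C = slices (carrier_vec K) (1\<^sub>m K) DS (mat_rows NS C)"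

definition source_kernel :: "'a::field mat \<Rightarrow> 'a vec set" where
  "source_kernel C = slices (carrier_vec K) (1\<^sub>m K) (DS \<union> relay_only) (mat_rows NS C)"

definition dest_kernel :: "'a::field mat \<Rightarrow> (nat \<Rightarrow> 'a mat) \<Rightarrow> 'a vec set" where
  "dest_kernel C G = relay_slices (direct_kernel C) (\<lambda>j. relay_in C (RS j)) RD {..<L} G"

lemma relay_in_carrier:
  assumes "C \<in> carrier_mat NS K" "j < L"
  shows "relay_in C (RS j) \<in> carrier_mat (card (RS j)) K"
proof -
  have "{i. i < NS \<and> i \<in> RS j} = RS j" using RS_subset[OF assms(2)] by auto
  then show ?thesis
    using assms(1) by (intro carrier_matI) (simp_all add: relay_in_def dim_submatrix(1))
qed

lemma mem_direct_kernel:
  assumes "C \<in> carrier_mat NS K"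
  shows "x \<in> direct_kernel C \<longleftrightarrow> x \<in> carrier_vec K \<and> (\<forall>i\<in>DS. row C i \<bullet> x = 0)"
  using assms DS_subset by (auto simp: direct_kernel_def slices_def mat_rows_def)

lemma dest_mat_mult_vec_eq_0:
  assumes C: "C \<in> carrier_mat NS K" and G: "\<And>j. j < L \<Longrightarrow> G j \<in> carrier_mat NR (card (RS j))"
    and x: "x \<in> dest_kernel C G"
  defines "CD \<equiv> dest_mat K L DS RS RD C G"
  shows "CD \<in> carrier_mat (dim_row CD) K" and "CD *\<^sub>v x = 0\<^sub>v (dim_row CD)"
proof -
  have "x \<in> direct_kernel C"
    and relay: "\<And>j t. j < L \<Longrightarrow> t \<in> RD j \<Longrightarrow> row (G j) t \<bullet> (relay_in C (RS j) *\<^sub>v x) = 0"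
    using x by (auto simp: dest_kernel_def relay_slices_def)
  then have xK: "x \<in> carrier_vec K" and direct: "\<And>i. i \<in> DS \<Longrightarrow> row C i \<bullet> x = 0"
    using mem_direct_kernel[OF C] by auto
  let ?B = "\<lambda>j. submatrix (G j * relay_in C (RS j)) (RD j) UNIV"
  have blocks: "dim_col (?B j) = K \<and> ?B j *\<^sub>v x = 0\<^sub>v (dim_row (?B j))" if "j \<in> set [0..<L]" for j
  proof -
    have j: "j < L" using that by simp
    have GC: "G j * relay_in C (RS j) \<in> carrier_mat NR K"
      using G[OF j] relay_in_carrier[OF C j] by auto
    have "?B j *\<^sub>v x = 0\<^sub>v (dim_row (?B j))"
      using GC xK relay[OF j] scalar_prod_row_mult[OF G[OF j] relay_in_carrier[OF C j] xK]
      by (intro submatrix_mult_vec_eq_0) auto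
    then show ?thesis using relay_in_carrier[OF C j] by simp
  qed
  define F where "F = foldr (\<lambda>j M. ?B j @\<^sub>r M) [0..<L] (0\<^sub>m 0 K)"
  have F: "dim_col F = K" "F *\<^sub>v x = 0\<^sub>v (dim_row F)"
    using foldr_append_rows_mult_vec_eq_0[of "[0..<L]" ?B K x, OF blocks xK] by (auto simp: F_def)
  have "submatrix C DS UNIV *\<^sub>v x = 0\<^sub>v (dim_row (submatrix C DS UNIV))"
    using C xK direct by (intro submatrix_mult_vec_eq_0) auto
  moreover have CD: "CD = submatrix C DS UNIV @\<^sub>r F" unfolding CD_def dest_mat_def F_def ..
  ultimately show "CD *\<^sub>v x = 0\<^sub>v (dim_row CD)"
    unfolding CD using C xK F by (intro append_rows_mult_vec_eq_0[where n = K]) auto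
  have "submatrix C DS UNIV \<in> carrier_mat (dim_row (submatrix C DS UNIV)) K"
    "F \<in> carrier_mat (dim_row F) K"
    using C F(1) by (auto intro: carrier_matI)
  from carrier_append_rows[OF this] show "CD \<in> carrier_mat (dim_row CD) K"
    unfolding CD by (metis carrier_matD(1))
qed

lemma dest_kernel_eq_0_if_full_rank:
  assumes C: "C \<in> carrier_mat NS K" and G: "\<And>j. j < L \<Longrightarrow> G j \<in> carrier_mat NR (card (RS j))"
    and rank: "let CD = dest_mat K L DS RS RD C G in vec_space.rank (dim_row CD) CD = K"
  shows "dest_kernel C G = {0\<^sub>v K}"
proof
  show "dest_kernel C G \<subseteq> {0\<^sub>v K}"
  proof
    fix x assume x: "x \<in> dest_kernel C G"
    then have "x \<in> direct_kernel C" by (simp add: dest_kernel_def relay_slices_def)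
    then have xK: "x \<in> carrier_vec K" using mem_direct_kernel[OF C] by blast
    have rk: "vec_space.rank (dim_row (dest_mat K L DS RS RD C G)) (dest_mat K L DS RS RD C G) = K"
      using rank by (simp add: Let_def)
    show "x \<in> {0\<^sub>v K}"
      using vec_space.full_rank_mult_vec_eq_0[OF dest_mat_mult_vec_eq_0(1)[OF C G x] rk xK
          dest_mat_mult_vec_eq_0(2)[OF C G x]] by simp
  qed
  have "relay_in C (RS j) *\<^sub>v 0\<^sub>v K = 0\<^sub>v (card (RS j))" if "j < L" for j
    using relay_in_carrier[OF C that] by (intro eq_vecI) auto
  moreover have "row (G j) t \<in> carrier_vec (card (RS j))" if "j < L" for j t
    using G[OF that] row_carrier[of "G j" t] by simp
  ultimately show "{0\<^sub>v K} \<subseteq> dest_kernel C G"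
    using C by (auto simp: dest_kernel_def relay_slices_def mem_direct_kernel)
qed

lemma source_kernel_subset_dest_kernel:
  assumes C: "C \<in> carrier_mat NS K" and G: "\<And>j. j < L \<Longrightarrow> G j \<in> carrier_mat NR (card (RS j))"
  shows "source_kernel C \<subseteq> dest_kernel C G"
proof
  fix x assume x: "x \<in> source_kernel C"
  then have xK: "x \<in> carrier_vec K" by (simp add: source_kernel_def slices_def)
  have sub: "DS \<union> relay_only \<subseteq> {..<NS}" using DS_subset RS_subset by (auto simp: relay_only_def)
  have rows: "row C i \<bullet> x = 0" if i: "i \<in> DS \<union> relay_only" for i
  proof -
    have "mat_rows NS C i \<bullet> x = 0" using x xK i by (auto simp: source_kernel_def slices_def)
    moreover have "i < NS" using i sub by auto
    ultimately show ?thesis by (simp add: mat_rows_def)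
  qed
  have "relay_in C (RS j) *\<^sub>v x = 0\<^sub>v (card (RS j))" if j: "j < L" for j
  proof -
    have "RS j \<subseteq> DS \<union> relay_only" using j by (auto simp: relay_only_def)
    then have "relay_in C (RS j) *\<^sub>v x = 0\<^sub>v (dim_row (relay_in C (RS j)))"
      unfolding relay_in_def using C xK rows by (intro submatrix_mult_vec_eq_0) auto
    then show ?thesis using relay_in_carrier[OF C j] by simp
  qed
  moreover have "row (G j) t \<in> carrier_vec (card (RS j))" if "j < L" for j t
    using G[OF that] row_carrier[of "G j" t] by simp
  ultimately show "x \<in> dest_kernel C G"
    using C xK rows by (auto simp: dest_kernel_def relay_slices_def mem_direct_kernel)
qed

lemma card_full_rank_le:
  fixes C :: "'a::{field,finite} mat"
  assumes C: "C \<in> carrier_mat NS K"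
  defines "\<G> \<equiv> \<Pi>\<^sub>E j\<in>{..<L}. carrier_mat NR (card (RS j)) :: 'a mat set"
  shows "real (card {G\<in>\<G>. let CD = dest_mat K L DS RS RD C G in vec_space.rank (dim_row CD) CD = K})
    \<le> real (card \<G>) * (Pfull CARD('a) (\<Sum>j<L. card (RD j)) (sdim (direct_kernel C))
        * Pfull CARD('a) 0 (sdim (source_kernel C)))"
proof -
  let ?P = "Pfull CARD('a)"
  let ?X = "\<lambda>G. let CD = dest_mat K L DS RS RD C G in vec_space.rank (dim_row CD) CD = K"
  have q: "1 \<le> CARD('a)" using two_le_card_field[where 'a = 'a] by simp
  have G: "G j \<in> carrier_mat NR (card (RS j))" if "G \<in> \<G>" "j < L" for G j
    using that by (auto simp: \<G>_def)
  have fin: "finite \<G>" unfolding \<G>_def by (intro finite_PiE finite_carrier_mat) simp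
  have direct: "vec_subspace K (direct_kernel C)"
    unfolding direct_kernel_def using DS_subset C
    by (intro vec_subspace_slices vec_subspace_carrier_vec) (auto simp: mat_rows_def)
  have ind: "(if ?X G then 1 else 0)
      \<le> ?P 0 (sdim (source_kernel C)) * ?P 0 (sdim (dest_kernel C G))"
    if "G \<in> \<G>" for G
  proof (cases "?X G")
    case True
    have dest: "dest_kernel C G = {0\<^sub>v K}"
      using dest_kernel_eq_0_if_full_rank[OF C G[OF that] True] .
    moreover have "0\<^sub>v K \<in> source_kernel C"
      by (simp add: source_kernel_def slices_def scalar_prod_def)
    ultimately have "source_kernel C = {0\<^sub>v K}"
      using source_kernel_subset_dest_kernel[OF C G[OF \<open>G \<in> \<G>\<close>]] by blast
    with dest show ?thesis using True by (simp add: sdim_eq Pfull_0_left)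
  qed (use q in \<open>simp add: Pfull_nonneg\<close>)
  have "real (card {G\<in>\<G>. ?X G}) = (\<Sum>G\<in>\<G>. if ?X G then 1 else 0)"
    using fin by (simp add: sum.inter_filter[symmetric])
  also have "\<dots> \<le> (\<Sum>G\<in>\<G>. ?P 0 (sdim (source_kernel C)) * ?P 0 (sdim (dest_kernel C G)))"
    by (rule sum_mono) (rule ind)
  also have "\<dots> = ?P 0 (sdim (source_kernel C))
      * (\<Sum>G\<in>\<G>. ?P 0 (sdim (relay_slices (direct_kernel C) (\<lambda>j. relay_in C (RS j)) RD {..<L} G)))"
    by (simp add: sum_distrib_left dest_kernel_def)
  also have "\<dots> \<le> ?P 0 (sdim (source_kernel C))
      * (real (card \<G>) * ?P (\<Sum>j<L. card (RD j)) (sdim (direct_kernel C)))"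
    unfolding \<G>_def using relay_in_carrier[OF C] RD_subset q
    by (intro mult_left_mono Pfull_nonneg
        sum_Pfull_sdim_relay_slices_le[OF _ _ _ direct, where k = 0, simplified]) auto
  finally show ?thesis by (simp add: ac_simps)
qed

lemma prob_X_le:
  "prob_X TYPE('a::{field,finite}) K L NS NR DS RS RD
    \<le> (\<Sum>c\<le>K. Pfull CARD('a) (\<Sum>j<L. card (RD j)) c * Pfull CARD('a) (card relay_only) c
        * Prank CARD('a) (K - c) (card DS) K)"
  (is "_ \<le> ?S")
proof -
  let ?P = "Pfull CARD('a)" and ?m = "\<Sum>j<L. card (RD j)" and ?V = "carrier_vec K :: 'a vec set"
  let ?C = "carrier_mat NS K :: 'a mat set"
  let ?G = "\<Pi>\<^sub>E j\<in>{..<L}. carrier_mat NR (card (RS j)) :: 'a mat set"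
  let ?X = "\<lambda>C G. let CD = dest_mat K L DS RS RD C G in vec_space.rank (dim_row CD) CD = K"
  let ?H = "\<lambda>\<rho>. ?P ?m (sdim (slices ?V (1\<^sub>m K) DS \<rho>))
    * ?P 0 (sdim (slices ?V (1\<^sub>m K) (DS \<union> relay_only) \<rho>))"
  have fin: "finite ?G" by (intro finite_PiE finite_carrier_mat) simp
  have "(\<lambda>j. if j < L then 0\<^sub>m NR (card (RS j)) else undefined) \<in> ?G" by auto
  then have G_pos: "0 < card ?G" using fin by (auto simp: card_gt_0_iff)
  have split: "DS \<union> ({..<NS} - DS) = {..<NS}" "DS \<inter> ({..<NS} - DS) = {}"
    and relay_only: "relay_only \<subseteq> {..<NS} - DS"
    using DS_subset RS_subset by (auto simp: relay_only_def)
  have "{(C, G) \<in> ?C \<times> ?G. ?X C G} = Sigma ?C (\<lambda>C. {G\<in>?G. ?X C G})" by auto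
  then have "card {(C, G) \<in> ?C \<times> ?G. ?X C G} = (\<Sum>C\<in>?C. card {G\<in>?G. ?X C G})"
    using fin by (simp add: card_SigmaI finite_carrier_mat)
  then have "real (card {(C, G) \<in> ?C \<times> ?G. ?X C G}) = (\<Sum>C\<in>?C. real (card {G\<in>?G. ?X C G}))"
    by simp
  also have "\<dots> \<le> (\<Sum>C\<in>?C. real (card ?G)
      * (?P ?m (sdim (direct_kernel C)) * ?P 0 (sdim (source_kernel C))))"
    by (intro sum_mono card_full_rank_le) simp
  also have "\<dots> = real (card ?G) * (\<Sum>C\<in>?C. ?H (mat_rows NS C))"
    by (simp add: sum_distrib_left direct_kernel_def source_kernel_def)
  also have "\<dots> = real (card ?G) * (\<Sum>\<rho>\<in>PiE {..<NS} (\<lambda>_. ?V). ?H \<rho>)"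
    by (simp only: sum.reindex_bij_betw[OF bij_betw_mat_rows, of ?H])
  also have "\<dots> \<le> real (card ?G) * (real CARD('a) ^ (K * NS) * ?S)"
    using sum_Pfull_sdim_slices_Un_le[OF finite_subset[OF DS_subset] _ split(2) relay_only,
        where f = "?P ?m" and n = K and 'a = 'a] split(1)
    by (intro mult_left_mono) (simp_all add: Pfull_nonneg)
  finally show ?thesis
    using G_pos by (simp add: prob_X_def outcomes_def card_cartesian_product card_carrier_mat
        divide_le_eq algebra_simps)
qed

end

theorem lemma2:
  fixes K L NS NR :: nat
    and DS :: "nat set"            \<comment> \<open>source packets received directly by D\<close>
    and RS :: "nat \<Rightarrow> nat set"     \<comment> \<open>source packets received by relay j\<close>
    and RD :: "nat \<Rightarrow> nat set"     \<comment> \<open>recoded packets of relay j received by D\<close>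
  assumes "K \<ge> 1" and "L \<ge> 1" and "NS \<ge> K" and "NR \<ge> 1"
    and "DS \<subseteq> {..<NS}"
    and "\<And>j. j < L \<Longrightarrow> RS j \<subseteq> {..<NS}"
    and "\<And>j. j < L \<Longrightarrow> RD j \<subseteq> {..<NR}"
  shows "prob_X TYPE('a::{field,finite}) K L NS NR DS RS RD
    \<le> P2 (card (UNIV :: 'a set))
         ((\<Sum>j<L. card (RD j)) + card DS)
         (card (\<Union>j<L. RS j) - card ((\<Union>j<L. RS j) \<inter> DS) + card DS)
         (card DS) K"
proof -
  \<comment> \<open>Only the three inclusion hypotheses are needed.\<close>
  interpret erasure_pattern K L NS NR DS RS RD
    using assms(5-7) by unfold_locales
  let ?U = "\<Union>j<L. RS j"
  have "finite (?U \<inter> DS)" using assms(5) by (auto intro: finite_subset)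
  then have "card relay_only = card ?U - card (?U \<inter> DS)"
    unfolding relay_only_def by (rule card_Diff_subset_Int)
  then show ?thesis
    using prob_X_le[where 'a = 'a]
      P2_eq_sum[of "CARD('a)" "\<Sum>j<L. card (RD j)" "card DS" "card relay_only" K]
    by simp
qed

end
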